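(* Let $m,\delta$ be positive integers, let $X=\{x_1,\dots,x_m\}$ be a set of numbers with $x_1>x_2>\dots>x_m\ge 0$, and let $\alpha=(\alpha_1,\dots,\alpha_\ell)$ be a $\delta$-deviation set of size $m$. Put $c_0=0$ and $c_j=\sum_{1\le i\le j}\alpha_i$ for $j\ge 1$, and $$\Delta(X,\alpha)=\Big|\sum_{j=0}^{\ell-1}(-1)^j\sum_{c_j<i\le c_{j+1}}x_i\Big|.$$ Then $\Delta(X,\alpha)\le \delta\cdot x_1$.
   Context: For positive integers $m$ and $\delta$, a $\delta$-deviation set of size $m$ is a finite sequence $(\alpha_1,\alpha_2,\dots,\alpha_\ell)$ of positive integers such that (i) $\sum_i\alpha_i=m$; (ii) $\big|\sum_i\alpha_{2i-1}-\sum_i\alpha_{2i}\big|\le 1$; (iii) $\big|\sum_{1\le i\le j}(-1)^{i-1}\alpha_i\big|\le\delta$ for every $j\ge 1$. *)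

theory Defs
  imports Complex_Main
begin

(* A delta-deviation set of size m: a list alpha = [alpha_1,...,alpha_l] of positive integers
   (alpha_i = alpha ! (i-1)) satisfying conditions (i)-(iii). *)
definition deviation_set :: "nat \<Rightarrow> nat \<Rightarrow> nat list \<Rightarrow> bool" where
  "deviation_set \<delta> m \<alpha> \<longleftrightarrow>
     (\<forall>a \<in> set \<alpha>. a > 0) \<and>
     sum_list \<alpha> = m \<and>
     \<bar>(\<Sum>i<length \<alpha>. (-1::int) ^ i * int (\<alpha> ! i))\<bar> \<le> 1 \<and>
     (\<forall>j\<ge>1. \<bar>(\<Sum>i<min j (length \<alpha>). (-1::int) ^ i * int (\<alpha> ! i))\<bar> \<le> int \<delta>)"

definition cpart :: "nat list \<Rightarrow> nat \<Rightarrow> nat" where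
  "cpart \<alpha> j = sum_list (take j \<alpha>)"

definition Delta :: "(nat \<Rightarrow> real) \<Rightarrow> nat list \<Rightarrow> real" where
  "Delta x \<alpha> = \<bar>\<Sum>j<length \<alpha>. (-1::real) ^ j * (\<Sum>i\<in>{cpart \<alpha> j <.. cpart \<alpha> (Suc j)}. x i)\<bar>"

end

theory Submission
  imports Defs
begin

text \<open>Abel summation. Let \<open>s\<^sub>i\<close> be the sign of the block containing \<open>i\<close> and
  \<open>S\<^sub>k = s\<^sub>1 + \<dots> + s\<^sub>k\<close>. Within a block \<open>S\<^sub>k\<close> moves monotonically between two
  alternating partial sums of \<open>\<alpha>\<close>, so condition (iii) gives \<open>\<bar>S\<^sub>k\<bar> \<le> \<delta>\<close> for every \<open>k\<close>.
  Then \<open>\<Sum> s\<^sub>i x\<^sub>i = \<Sum>\<^sub>k<\<^sub>m S\<^sub>k (x\<^sub>k - x\<^sub>k\<^sub>+\<^sub>1) + S\<^sub>m x\<^sub>m\<close>, and since all the differences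
  and \<open>x\<^sub>m\<close> are nonnegative its absolute value is at most \<open>\<delta> (x\<^sub>1 - x\<^sub>m) + \<delta> x\<^sub>m = \<delta> x\<^sub>1\<close>.
  Formally we carry, block by block, the invariant
  \<open>\<bar>\<Sum>\<^sub>i\<^sub>\<le>\<^sub>k s\<^sub>i y\<^sub>i - S\<^sub>k y\<^sub>k\<bar> \<le> \<delta> (y\<^sub>0 - y\<^sub>k)\<close>, where \<open>y\<close> is \<open>x\<close> extended by \<open>y\<^sub>0 = x\<^sub>1\<close>.\<close>

definition alt_partial_sum :: "nat list \<Rightarrow> nat \<Rightarrow> real" where
  "alt_partial_sum \<alpha> j = (\<Sum>i<j. (-1) ^ i * real (\<alpha> ! i))"

definition alt_block_sum :: "(nat \<Rightarrow> real) \<Rightarrow> nat list \<Rightarrow> nat \<Rightarrow> real" where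
  "alt_block_sum y \<alpha> j = (\<Sum>j'<j. (-1) ^ j' * (\<Sum>i\<in>{cpart \<alpha> j' <.. cpart \<alpha> (Suc j')}. y i))"

lemma cpart_Suc: "j < length \<alpha> \<Longrightarrow> cpart \<alpha> (Suc j) = cpart \<alpha> j + \<alpha> ! j"
  unfolding cpart_def by (simp add: take_Suc_conv_app_nth)

lemma cpart_le_sum_list: "cpart \<alpha> j \<le> sum_list \<alpha>"
  unfolding cpart_def by (metis append_take_drop_id le_add1 sum_list_append)

lemma cpart_length: "cpart \<alpha> (length \<alpha>) = sum_list \<alpha>"
  by (simp add: cpart_def)

lemma abel_block_step:
  fixes y :: "nat \<Rightarrow> real" and \<sigma> P T d A :: real
  assumes mono: "\<And>k. a \<le> k \<Longrightarrow> k < a + n \<Longrightarrow> y (Suc k) \<le> y k"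
    and start: "\<bar>P\<bar> \<le> d" and final: "\<bar>P + \<sigma> * real n\<bar> \<le> d"
    and inv: "\<bar>T - P * y a\<bar> \<le> d * (A - y a)"
  shows "\<bar>T + \<sigma> * (\<Sum>i\<in>{a<..a+n}. y i) - (P + \<sigma> * real n) * y (a+n)\<bar> \<le> d * (A - y (a+n))"
proof -
  have "\<bar>T + \<sigma> * (\<Sum>i\<in>{a<..a+t}. y i) - (P + \<sigma> * real t) * y (a+t)\<bar> \<le> d * (A - y (a+t))"
    if "t \<le> n" for t
    using that
  proof (induction t)
    case 0
    then show ?case using inv by simp
  next
    case (Suc t)
    let ?E = "T + \<sigma> * (\<Sum>i\<in>{a<..a+t}. y i) - (P + \<sigma> * real t) * y (a+t)"
    let ?D = "y (a+t) - y (Suc (a+t))"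
    have IH: "\<bar>?E\<bar> \<le> d * (A - y (a+t))"
      using Suc by simp
    have "\<sigma> * real t \<le> max 0 (\<sigma> * real n) \<and> min 0 (\<sigma> * real n) \<le> \<sigma> * real t"
      using Suc.prems
      by (cases "\<sigma> \<ge> 0")
        (auto simp: mult_left_mono mult_left_mono_neg max_def min_def zero_le_mult_iff mult_le_0_iff)
    then have slope: "\<bar>P + \<sigma> * real t\<bar> \<le> d"
      using start final by (auto simp: abs_le_iff)
    have "?D \<ge> 0" using mono Suc.prems by simp
    then have step: "\<bar>(P + \<sigma> * real t) * ?D\<bar> \<le> d * ?D"
      using slope by (simp add: abs_mult mult_right_mono)
    have "{a<..a + Suc t} = insert (Suc (a+t)) {a<..a+t}" by auto
    then have "T + \<sigma> * (\<Sum>i\<in>{a<..a + Suc t}. y i) - (P + \<sigma> * real (Suc t)) * y (a + Suc t)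
        = ?E + (P + \<sigma> * real t) * ?D"
      by (simp add: algebra_simps)
    then show ?case
      using IH step abs_triangle_ineq[of ?E "(P + \<sigma> * real t) * ?D"]
      by (simp add: algebra_simps)
  qed
  then show ?thesis by simp
qed

lemma alt_block_sum_invariant:
  fixes y :: "nat \<Rightarrow> real"
  assumes mono: "\<And>k. k < sum_list \<alpha> \<Longrightarrow> y (Suc k) \<le> y k"
    and partial: "\<And>j. j \<le> length \<alpha> \<Longrightarrow> \<bar>alt_partial_sum \<alpha> j\<bar> \<le> d"
    and "j \<le> length \<alpha>"
  shows "\<bar>alt_block_sum y \<alpha> j - alt_partial_sum \<alpha> j * y (cpart \<alpha> j)\<bar> \<le> d * (y 0 - y (cpart \<alpha> j))"
  using \<open>j \<le> length \<alpha>\<close>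
proof (induction j)
  case 0
  then show ?case by (simp add: alt_block_sum_def alt_partial_sum_def cpart_def)
next
  case (Suc j)
  then have j: "j < length \<alpha>" by simp
  have c: "cpart \<alpha> (Suc j) = cpart \<alpha> j + \<alpha> ! j"
    using cpart_Suc[OF j] .
  have "\<And>k. cpart \<alpha> j \<le> k \<Longrightarrow> k < cpart \<alpha> j + \<alpha> ! j \<Longrightarrow> y (Suc k) \<le> y k"
    using mono cpart_le_sum_list[of \<alpha> "Suc j"] c by simp
  from abel_block_step[where a = "cpart \<alpha> j" and n = "\<alpha> ! j" and y = y, OF this,
      of "alt_partial_sum \<alpha> j" d "(-1) ^ j"]
  show ?case
    using Suc partial[of j] partial[of "Suc j"] c
    by (simp add: alt_block_sum_def alt_partial_sum_def)
qed

lemma alt_block_sum_bound: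
  fixes y :: "nat \<Rightarrow> real"
  assumes "\<And>k. k < sum_list \<alpha> \<Longrightarrow> y (Suc k) \<le> y k"
    and "\<And>j. j \<le> length \<alpha> \<Longrightarrow> \<bar>alt_partial_sum \<alpha> j\<bar> \<le> d"
    and "y (sum_list \<alpha>) \<ge> 0"
  shows "\<bar>alt_block_sum y \<alpha> (length \<alpha>)\<bar> \<le> d * y 0"
proof -
  let ?P = "alt_partial_sum \<alpha> (length \<alpha>)" and ?z = "y (sum_list \<alpha>)"
  have "\<bar>alt_block_sum y \<alpha> (length \<alpha>) - ?P * ?z\<bar> \<le> d * (y 0 - ?z)"
    using alt_block_sum_invariant[where y = y and \<alpha> = \<alpha>, OF assms(1,2), of "length \<alpha>"] by (simp add: cpart_length)
  moreover have "\<bar>?P * ?z\<bar> \<le> d * ?z"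
    using assms(2)[of "length \<alpha>"] assms(3) by (simp add: abs_mult mult_right_mono)
  ultimately show ?thesis by (simp add: algebra_simps)
qed

lemma deviation_set_alt_partial_sum:
  assumes "deviation_set \<delta> m \<alpha>" and "j \<le> length \<alpha>"
  shows "\<bar>alt_partial_sum \<alpha> j\<bar> \<le> real \<delta>"
proof (cases "j = 0")
  case True
  then show ?thesis by (simp add: alt_partial_sum_def)
next
  case False
  with assms have "\<bar>(\<Sum>i<j. (-1::int) ^ i * int (\<alpha> ! i))\<bar> \<le> int \<delta>"
    unfolding deviation_set_def by (metis min.absorb1 less_one not_le)
  then have "\<bar>real_of_int (\<Sum>i<j. (-1::int) ^ i * int (\<alpha> ! i))\<bar> \<le> real \<delta>"
    by linarith
  then show ?thesis by (simp add: alt_partial_sum_def)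
qed

theorem lemma1:
  fixes m \<delta> :: nat and x :: "nat \<Rightarrow> real" and \<alpha> :: "nat list"
  assumes "m > 0" and "\<delta> > 0"
    and "\<And>i. 1 \<le> i \<Longrightarrow> i < m \<Longrightarrow> x i > x (Suc i)"
    and "x m \<ge> 0"
    and "deviation_set \<delta> m \<alpha>"
  shows "Delta x \<alpha> \<le> real \<delta> * x 1"
proof -
  define y where "y = x(0 := x 1)"
  have m: "sum_list \<alpha> = m"
    using assms(5) by (simp add: deviation_set_def)
  have "y (Suc k) \<le> y k" if "k < sum_list \<alpha>" for k
    using assms(3)[of k] that m by (cases "k = 0") (auto simp: y_def)
  from alt_block_sum_bound[where y = y and \<alpha> = \<alpha>, OF this deviation_set_alt_partial_sum[OF assms(5)]]
  have "\<bar>alt_block_sum y \<alpha> (length \<alpha>)\<bar> \<le> real \<delta> * x 1"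
    using assms(1,4) m by (simp add: y_def)
  moreover have "alt_block_sum y \<alpha> (length \<alpha>) = alt_block_sum x \<alpha> (length \<alpha>)"
    unfolding alt_block_sum_def y_def by (intro sum.cong refl) auto
  ultimately show ?thesis
    by (simp add: Delta_def alt_block_sum_def)
qed

end
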